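(* Let $\varSigma$ be a finite alphabet, $d=|\varSigma|$, $N\ge1$, and $S=\{i\in\mathbb{Z}^d: i_\ell\ge0\ \forall\ell\in\varSigma,\ \sum_\ell i_\ell=N\}$. Let $(w_{\ell m})_{\ell,m\in\varSigma}$ be an irreducible Markov generator on $\varSigma$ that is reversible with respect to a distribution $\gamma$ on $\varSigma$. Let $\mathfrak{S}=\{e_m-e_\ell: m,\ell\in\varSigma, m\neq\ell\}$ and for $z\in\mathbb{R}^d$ define $U_k(z)=w_{\ell m}z_\ell$ if $k=e_m-e_\ell\in\mathfrak{S}$, $U_0(z)=-\sum_{\ell\ne m}w_{\ell m}z_\ell$, and $U_k(z)=0$ otherwise. Let $\boldsymbol{U}=(U_{ij})_{i,j\in S}$ with $U_{ij}=U_{j-i}(i)$, and let $R_i=R(i)$ with $R(z)=r\cdot z$ for some $r\in\mathbb{R}^d$. Then for every $z\in\mathrm{rint\,conv}\,S=\{z\in\mathbb{R}^d: z_\ell>0\ \forall\ell,\ \sum_\ell z_\ell=N\}$, \[ \Lambda(z)=R(z)-\frac12\sum_{k\in\mathfrak{S}}\Big(\sqrt{U_k(z)}-\sqrt{U_{-k}(z)}\Big)^2=\langle\nu^{(z)},R\rangle-I_{\boldsymbol{U}}(\nu^{(z)}), \] where $\nu^{(z)}=\mathrm{Mult}_{N,z/N}$ is the multinomial distribution with mean $z$, and \[ \Lambda(z):=\max_{\nu\in\mathsf{P}(S):\ \sum_i\nu_i i=z}\big[\langle\nu,R\rangle-I_{\boldsymbol{U}}(\nu)\big]. \]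
   Context: $e_\ell$ denotes the unit vector in $\mathbb{R}^d$ with coordinate $\ell$ equal to $1$ (coordinates indexed by $\varSigma$). $\mathsf{P}(S)$ is the set of probability vectors on $S$, $\langle\nu,f\rangle=\sum_i\nu_if_i$, and $I_{\boldsymbol{U}}(\nu):=\sup_{v\in(0,\infty)^S}[-\sum_i\nu_i(\boldsymbol{U}v)_i/v_i]$. $\mathrm{Mult}_{N,p}$ is the multinomial distribution of $N$ samples from the distribution $p$ on $\varSigma$, regarded as a probability vector on $S$. *)

theory Defs
  imports Complex_Main
begin

definition unitv :: "'a \<Rightarrow> 'a \<Rightarrow> int" where
  "unitv l = (\<lambda>m. if m = l then 1 else 0)"

definition lattS :: "nat \<Rightarrow> ('a::finite \<Rightarrow> nat) set" where
  "lattS N = {i. (\<Sum>l\<in>UNIV. i l) = N}"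

definition Sfrak :: "('a \<Rightarrow> int) set" where
  "Sfrak = {(\<lambda>a. unitv m a - unitv l a) | m l. m \<noteq> l}"

definition markov_generator :: "('a::finite \<Rightarrow> 'a \<Rightarrow> real) \<Rightarrow> bool" where
  "markov_generator w \<longleftrightarrow> (\<forall>l m. l \<noteq> m \<longrightarrow> w l m \<ge> 0) \<and>
     (\<forall>l. w l l = - (\<Sum>m\<in>UNIV - {l}. w l m))"

definition irreducible_gen :: "('a \<Rightarrow> 'a \<Rightarrow> real) \<Rightarrow> bool" where
  "irreducible_gen w \<longleftrightarrow> (\<forall>l m. (l, m) \<in> {(a, b). a \<noteq> b \<and> w a b > 0}\<^sup>*)"

definition reversible_wrt :: "('a::finite \<Rightarrow> 'a \<Rightarrow> real) \<Rightarrow> ('a \<Rightarrow> real) \<Rightarrow> bool" where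
  "reversible_wrt w \<gamma> \<longleftrightarrow> (\<forall>l. \<gamma> l \<ge> 0) \<and> (\<Sum>l\<in>UNIV. \<gamma> l) = 1 \<and>
     (\<forall>l m. \<gamma> l * w l m = \<gamma> m * w m l)"

definition Ufun :: "('a::finite \<Rightarrow> 'a \<Rightarrow> real) \<Rightarrow> ('a \<Rightarrow> int) \<Rightarrow> ('a \<Rightarrow> real) \<Rightarrow> real" where
  "Ufun w k z =
    (if k \<in> Sfrak then
       (case (THE (l, m). l \<noteq> m \<and> k = (\<lambda>a. unitv m a - unitv l a)) of (l, m) \<Rightarrow> w l m * z l)
     else if k = (\<lambda>_. 0) then - (\<Sum>(l, m)\<in>{(l, m). l \<noteq> m}. w l m * z l)
     else 0)"

definition Umat :: "('a::finite \<Rightarrow> 'a \<Rightarrow> real) \<Rightarrow> ('a \<Rightarrow> nat) \<Rightarrow> ('a \<Rightarrow> nat) \<Rightarrow> real" where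
  "Umat w i j = Ufun w (\<lambda>l. int (j l) - int (i l)) (\<lambda>l. real (i l))"

definition probS :: "nat \<Rightarrow> (('a::finite \<Rightarrow> nat) \<Rightarrow> real) set" where
  "probS N = {\<nu>. (\<forall>i\<in>lattS N. \<nu> i \<ge> 0) \<and> (\<Sum>i\<in>lattS N. \<nu> i) = 1}"

definition I_U :: "('a::finite \<Rightarrow> 'a \<Rightarrow> real) \<Rightarrow> nat \<Rightarrow> (('a \<Rightarrow> nat) \<Rightarrow> real) \<Rightarrow> real" where
  "I_U w N \<nu> = (SUP v \<in> {v. \<forall>j\<in>lattS N. v j > 0}.
      - (\<Sum>i\<in>lattS N. \<nu> i * (\<Sum>j\<in>lattS N. Umat w i j * v j) / v i))"

definition Rlin :: "('a::finite \<Rightarrow> real) \<Rightarrow> ('a \<Rightarrow> real) \<Rightarrow> real" where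
  "Rlin r z = (\<Sum>l\<in>UNIV. r l * z l)"

definition pairR :: "nat \<Rightarrow> (('a::finite \<Rightarrow> nat) \<Rightarrow> real) \<Rightarrow> ('a \<Rightarrow> real) \<Rightarrow> real" where
  "pairR N \<nu> r = (\<Sum>i\<in>lattS N. \<nu> i * Rlin r (\<lambda>l. real (i l)))"

definition objective :: "('a::finite \<Rightarrow> 'a \<Rightarrow> real) \<Rightarrow> ('a \<Rightarrow> real) \<Rightarrow> nat \<Rightarrow> (('a \<Rightarrow> nat) \<Rightarrow> real) \<Rightarrow> real" where
  "objective w r N \<nu> = pairR N \<nu> r - I_U w N \<nu>"

definition feasible :: "nat \<Rightarrow> ('a::finite \<Rightarrow> real) \<Rightarrow> (('a \<Rightarrow> nat) \<Rightarrow> real) set" where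
  "feasible N z = {\<nu>. \<nu> \<in> probS N \<and> (\<forall>l. (\<Sum>i\<in>lattS N. \<nu> i * real (i l)) = z l)}"

text \<open>Lambda(z) = max over feasible nu (stated via Sup; attainment is part of the theorem)\<close>
definition Lam :: "('a::finite \<Rightarrow> 'a \<Rightarrow> real) \<Rightarrow> ('a \<Rightarrow> real) \<Rightarrow> nat \<Rightarrow> ('a \<Rightarrow> real) \<Rightarrow> real" where
  "Lam w r N z = Sup (objective w r N ` feasible N z)"

definition multinomial :: "nat \<Rightarrow> ('a::finite \<Rightarrow> real) \<Rightarrow> ('a \<Rightarrow> nat) \<Rightarrow> real" where
  "multinomial N p i =
     (if i \<in> lattS N then real (fact N) / (\<Prod>l\<in>UNIV. real (fact (i l))) * (\<Prod>l\<in>UNIV. p l ^ i l)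
      else 0)"

end

theory Submission
  imports Defs
begin

text \<open>
  Substituting i + e_l for the points of S_N (i in S_(N-1)), the Donsker--Varadhan objective
  becomes -sum_i nu_i (U v)_i / v_i = sum F_lm(i) (1 - t_lm(i)) over l ~= m and i, with the jump flows
  F_lm(i) = (i_l + 1) w_lm nu(i + e_l) and the ratios t_lm(i) = v(i + e_m) / v(i + e_l).
  As t_ml = 1 / t_lm, AM-GM bounds I_U(nu) by sum (F_lm - sqrt (F_lm F_ml)).
  Conversely, the ratios of the product test function v(i) = prod_l (z_l / gamma_l)^(i_l / 2) do not
  depend on i, so for every nu with mean z its value only involves the fluxes w_lm z_l, and by
  detailed balance it equals sum (w_lm z_l - sqrt (w_lm z_l w_ml z_m)), the square-root term of the
  theorem. For the multinomial, F_lm(i) = w_lm z_l Mult_(N-1, z/N)(i), so the AM-GM bound is attained: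
  the multinomial minimises I_U among all nu with mean z, while <nu, R> = R(z) for all of them.
\<close>

definition incr :: "'a \<Rightarrow> ('a \<Rightarrow> nat) \<Rightarrow> 'a \<Rightarrow> nat" where
  "incr k i = i(k := Suc (i k))"

text \<open>If \<open>i l = 0\<close>, the truncated subtraction makes it leave
  the simplex; such moves always carry the weight \<open>i l = 0\<close>.\<close>
definition move :: "'a \<Rightarrow> 'a \<Rightarrow> ('a \<Rightarrow> nat) \<Rightarrow> 'a \<Rightarrow> nat" where
  "move l m i = i(l := i l - 1, m := Suc (i m))"

definition jump :: "'a \<Rightarrow> 'a \<Rightarrow> 'a \<Rightarrow> int" where
  "jump l m = (\<lambda>a. unitv m a - unitv l a)"

definition off_diag :: "('a \<times> 'a) set" where
  "off_diag = {(l, m). l \<noteq> m}"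

lemma sum_off_diag_swap: "(\<Sum>(l, m)\<in>off_diag. f l m) = (\<Sum>(l, m)\<in>off_diag. f m l :: 'b::comm_monoid_add)"
  by (rule sum.reindex_bij_witness[of _ prod.swap prod.swap]) (auto simp: off_diag_def)

subsection \<open>The simplex lattice\<close>

lemma lattS_le: "i \<in> lattS N \<Longrightarrow> i l \<le> N"
  unfolding lattS_def using member_le_sum[of l UNIV i] by simp

lemma finite_lattS [simp]: "finite (lattS N :: ('a::finite \<Rightarrow> nat) set)"
proof (rule finite_subset)
  show "lattS N \<subseteq> {i. \<forall>l. (l \<in> UNIV \<longrightarrow> i l \<in> {..N}) \<and> (l \<notin> UNIV \<longrightarrow> i l = 0)}"
    using lattS_le by auto
qed (rule finite_set_of_finite_funs, auto)

lemma lattS_zero: "lattS 0 = {(\<lambda>_. 0) :: 'a::finite \<Rightarrow> nat}"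
  unfolding lattS_def by auto

lemma sum_fun_upd_nat:
  "(\<Sum>l\<in>UNIV. (i(k := x)) l) = (\<Sum>l\<in>UNIV. i l) - i k + (x :: nat)"
  for i :: "'a::finite \<Rightarrow> nat"
  using sum.remove[of UNIV k "i(k := x)"] sum.remove[of UNIV k i] by simp

lemma prod_incr_power: "(\<Prod>l\<in>UNIV. a l ^ incr k i l) = a k * (\<Prod>l\<in>UNIV. a l ^ i l)"
  for a :: "'a::finite \<Rightarrow> 'b::comm_monoid_mult"
  unfolding incr_def using prod.remove[of UNIV k "\<lambda>l. a l ^ (i(k := Suc (i k))) l"]
    prod.remove[of UNIV k "\<lambda>l. a l ^ i l"] by (simp add: mult.assoc)

lemma incr_in_lattS: "i \<in> lattS N \<Longrightarrow> incr k i \<in> lattS (Suc N)"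
  using sum_fun_upd_nat[of i k "Suc (i k)"] member_le_sum[of k UNIV i]
  by (auto simp: lattS_def incr_def)

text \<open>Counting the points of \<open>S\<^sub>M\<^sub>+\<^sub>1\<close> by their coordinate \<open>k\<close>: every \<open>j\<close> with \<open>j k > 0\<close>
  is \<open>i + e\<^sub>k\<close> for a unique \<open>i \<in> S\<^sub>M\<close>.\<close>
lemma sum_lattS_Suc_coord:
  "(\<Sum>j\<in>lattS (Suc M). real (j k) * g j) = (\<Sum>i\<in>lattS M. real (Suc (i k)) * g (incr k i))"
  for g :: "('a::finite \<Rightarrow> nat) \<Rightarrow> real"
proof -
  have "(\<Sum>j\<in>lattS (Suc M). real (j k) * g j) = (\<Sum>j\<in>{j\<in>lattS (Suc M). j k \<noteq> 0}. real (j k) * g j)"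
    by (rule sum.mono_neutral_right) auto
  also have "\<dots> = (\<Sum>i\<in>lattS M. real (Suc (i k)) * g (incr k i))"
  proof (rule sum.reindex_bij_witness[of _ "incr k" "\<lambda>j. j(k := j k - 1)"])
    fix j :: "'a \<Rightarrow> nat" assume j: "j \<in> {j \<in> lattS (Suc M). j k \<noteq> 0}"
    then show "incr k (j(k := j k - 1)) = j" by (auto simp: incr_def)
    show "j(k := j k - 1) \<in> lattS M"
      using j sum_fun_upd_nat[of j k "j k - 1"] member_le_sum[of k UNIV j] by (auto simp: lattS_def)
    show "real (Suc ((j(k := j k - 1)) k)) * g (incr k (j(k := j k - 1))) = real (j k) * g j"
      using j by (auto simp: incr_def)
  next
    fix i :: "'a \<Rightarrow> nat" assume "i \<in> lattS M"
    then show "incr k i \<in> {j \<in> lattS (Suc M). j k \<noteq> 0}"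
      using incr_in_lattS by (simp add: incr_def)
    show "(incr k i)(k := incr k i k - 1) = i"
      by (simp add: incr_def)
  qed
  finally show ?thesis .
qed

subsection \<open>The multinomial distribution\<close>

lemma multinomial_nonneg: "(\<And>l. p l \<ge> 0) \<Longrightarrow> multinomial N p i \<ge> 0"
  unfolding multinomial_def by (auto intro!: mult_nonneg_nonneg divide_nonneg_nonneg prod_nonneg)

lemma multinomial_incr:
  fixes p :: "'a::finite \<Rightarrow> real"
  assumes i: "i \<in> lattS M"
  shows "real (Suc (i k)) * multinomial (Suc M) p (incr k i) = real (Suc M) * p k * multinomial M p i"
proof -
  define F where "F = (\<Prod>l\<in>UNIV. real (fact (i l)))"
  define Q where "Q = (\<Prod>l\<in>UNIV. p l ^ i l)"
  have fact_incr: "(\<Prod>l\<in>UNIV. real (fact (incr k i l))) = real (Suc (i k)) * F"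
    unfolding incr_def F_def using prod.remove[of UNIV k "\<lambda>l. real (fact ((i(k := Suc (i k))) l))"]
      prod.remove[of UNIV k "\<lambda>l. real (fact (i l))"] by (simp add: algebra_simps)
  have "F > 0"
    unfolding F_def by (simp add: prod_pos)
  have fact_Suc_M: "real (fact (Suc M)) = real (Suc M) * real (fact M)"
    by (simp add: algebra_simps)
  have "real (Suc (i k)) * multinomial (Suc M) p (incr k i)
      = real (Suc (i k)) * (real (fact (Suc M)) / (real (Suc (i k)) * F) * (p k * Q))"
    using incr_in_lattS[OF i] unfolding multinomial_def fact_incr prod_incr_power Q_def by simp
  also have "\<dots> = real (Suc M) * p k * (real (fact M) / F * Q)"
    unfolding fact_Suc_M using \<open>F > 0\<close> by (simp add: field_simps del: of_nat_Suc fact_Suc)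
  also have "\<dots> = real (Suc M) * p k * multinomial M p i"
    using i unfolding multinomial_def F_def Q_def by simp
  finally show ?thesis .
qed

lemma sum_multinomial: "(\<Sum>i\<in>lattS N. multinomial N p i) = (\<Sum>l\<in>UNIV. p l) ^ N"
  for p :: "'a::finite \<Rightarrow> real"
proof (induction N)
  case 0
  then show ?case by (simp add: lattS_zero multinomial_def)
next
  case (Suc M)
  have "(\<Sum>j\<in>lattS (Suc M). multinomial (Suc M) p j)
      = (\<Sum>j\<in>lattS (Suc M). (\<Sum>l\<in>UNIV. real (j l)) / real (Suc M) * multinomial (Suc M) p j)"
    by (rule sum.cong) (auto simp: lattS_def simp flip: of_nat_sum simp del: of_nat_Suc)
  also have "\<dots> = 1 / real (Suc M) * (\<Sum>l\<in>UNIV. \<Sum>j\<in>lattS (Suc M). real (j l) * multinomial (Suc M) p j)"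
    by (simp add: sum_distrib_left sum_distrib_right sum_divide_distrib sum.swap[of _ UNIV] del: of_nat_Suc)
  also have "\<dots> = 1 / real (Suc M) * (\<Sum>l\<in>UNIV. \<Sum>i\<in>lattS M. real (Suc M) * p l * multinomial M p i)"
    by (simp only: sum_lattS_Suc_coord multinomial_incr cong: sum.cong)
  also have "\<dots> = (\<Sum>l\<in>UNIV. p l * (\<Sum>i\<in>lattS M. multinomial M p i))"
    by (simp add: sum_distrib_left sum_distrib_right del: of_nat_Suc)
  also have "\<dots> = (\<Sum>l\<in>UNIV. p l) ^ Suc M"
    by (simp add: Suc sum_distrib_right)
  finally show ?case .
qed

lemma multinomial_mean:
  "(\<Sum>j\<in>lattS (Suc M). multinomial (Suc M) p j * real (j k)) = real (Suc M) * p k * (\<Sum>l\<in>UNIV. p l) ^ M"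
  for p :: "'a::finite \<Rightarrow> real"
proof -
  have "(\<Sum>j\<in>lattS (Suc M). multinomial (Suc M) p j * real (j k))
      = (\<Sum>i\<in>lattS M. real (Suc M) * p k * multinomial M p i)"
    by (simp only: mult.commute[of "multinomial (Suc M) p _"] sum_lattS_Suc_coord multinomial_incr
        cong: sum.cong)
  then show ?thesis
    by (simp add: sum_multinomial flip: sum_distrib_left)
qed

subsection \<open>The generator matrix\<close>

lemma jump_inj:
  assumes "l \<noteq> m" "l' \<noteq> m'" "jump l m = jump l' m'"
  shows "l = l' \<and> m = m'"
proof -
  have "jump l' m' m = 1" "jump l' m' l = -1"
    using assms(1) fun_cong[OF assms(3), of m] fun_cong[OF assms(3), of l] by (simp_all add: jump_def unitv_def)
  then show ?thesis
    by (auto simp: jump_def unitv_def split: if_splits)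
qed

lemma inj_on_jump: "inj_on (\<lambda>(l, m). jump l m) off_diag"
  by (rule inj_onI) (auto simp: off_diag_def dest: jump_inj)

lemma Sfrak_eq_jump_image: "Sfrak = (\<lambda>(l, m). jump l m) ` off_diag"
  unfolding Sfrak_def off_diag_def jump_def by auto

lemma uminus_jump: "(\<lambda>a. - jump l m a) = jump m l"
  by (auto simp: jump_def)

lemma zero_notin_Sfrak: "(\<lambda>_. 0) \<notin> (Sfrak :: ('a \<Rightarrow> int) set)"
proof
  assume "(\<lambda>_. 0) \<in> (Sfrak :: ('a \<Rightarrow> int) set)"
  then obtain l m :: 'a where "m \<noteq> l" "(\<lambda>_. 0) = jump l m"
    unfolding Sfrak_def jump_def by blast
  then show False
    using fun_cong[of "\<lambda>_. 0" "jump l m" m] by (simp add: jump_def unitv_def)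
qed

lemma Ufun_jump: "l \<noteq> m \<Longrightarrow> Ufun w (jump l m) z = w l m * z l"
proof -
  assume lm: "l \<noteq> m"
  have "(THE (l', m'). l' \<noteq> m' \<and> jump l m = (\<lambda>a. unitv m' a - unitv l' a)) = (l, m)"
    using lm by (rule_tac the_equality) (auto simp flip: jump_def dest: jump_inj)
  moreover have "jump l m \<in> Sfrak"
    using lm unfolding Sfrak_eq_jump_image off_diag_def by auto
  ultimately show ?thesis
    unfolding Ufun_def by simp
qed

lemma Umat_diag: "Umat w i i = - (\<Sum>(l, m)\<in>off_diag. w l m * real (i l))"
  unfolding Umat_def Ufun_def off_diag_def by (simp add: zero_notin_Sfrak)

lemma move_diff_eq_jump: "l \<noteq> m \<Longrightarrow> i l \<noteq> 0 \<Longrightarrow> (\<lambda>a. int (move l m i a) - int (i a)) = jump l m"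
  by (auto simp: move_def jump_def unitv_def)

lemma Umat_move: "l \<noteq> m \<Longrightarrow> i l \<noteq> 0 \<Longrightarrow> Umat w i (move l m i) = w l m * real (i l)"
  by (simp add: Umat_def move_diff_eq_jump Ufun_jump)

lemma Umat_eq_0:
  assumes "j \<noteq> i" and not_move: "\<And>l m. l \<noteq> m \<Longrightarrow> i l \<noteq> 0 \<Longrightarrow> j \<noteq> move l m i"
  shows "Umat w i j = 0"
proof -
  have "(\<lambda>a. int (j a) - int (i a)) \<noteq> (\<lambda>_. 0)"
    using \<open>j \<noteq> i\<close> by (auto simp: fun_eq_iff)
  moreover have "(\<lambda>a. int (j a) - int (i a)) \<notin> Sfrak"
  proof
    assume "(\<lambda>a. int (j a) - int (i a)) \<in> Sfrak"
    then obtain l m where lm: "l \<noteq> m" and d: "(\<lambda>a. int (j a) - int (i a)) = jump l m"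
      unfolding Sfrak_eq_jump_image off_diag_def by auto
    have "int (j l) - int (i l) = -1"
      using lm fun_cong[OF d, of l] by (simp add: jump_def unitv_def)
    then have "i l \<noteq> 0"
      by linarith
    then have "(\<lambda>a. int (j a) - int (i a)) = (\<lambda>a. int (move l m i a) - int (i a))"
      using d move_diff_eq_jump[OF lm] by simp
    then have "j = move l m i"
      by (simp add: fun_eq_iff)
    then show False
      using not_move lm \<open>i l \<noteq> 0\<close> by blast
  qed
  ultimately show ?thesis
    unfolding Umat_def Ufun_def by simp
qed

lemma move_in_lattS:
  assumes "l \<noteq> m" "i l \<noteq> 0" "i \<in> lattS N"
  shows "move l m i \<in> lattS N"
proof -
  have "i l + i m \<le> (\<Sum>a\<in>UNIV. i a)"
    using sum_mono2[of UNIV "{l, m}" i] assms(1) by simp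
  then show ?thesis
    using assms sum_fun_upd_nat[of "i(l := i l - 1)" m "Suc (i m)"] sum_fun_upd_nat[of i l "i l - 1"]
    by (simp add: move_def lattS_def)
qed

lemma move_neq: "move l m i \<noteq> i"
  unfolding move_def by (metis fun_upd_same n_not_Suc_n)

lemma move_inj:
  assumes "l \<noteq> m" "i l \<noteq> 0" "l' \<noteq> m'" "i l' \<noteq> 0" "move l m i = move l' m' i"
  shows "l = l' \<and> m = m'"
proof -
  have "jump l m = (\<lambda>a. int (move l m i a) - int (i a))"
    using move_diff_eq_jump[of l m i] assms(1,2) by simp
  also have "\<dots> = jump l' m'"
    unfolding assms(5) using move_diff_eq_jump[of l' m' i] assms(3,4) by simp
  finally show ?thesis
    by (rule jump_inj[OF assms(1,3)])
qed

lemma sum_Umat_off_diagonal: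
  assumes i: "i \<in> lattS N"
  shows "(\<Sum>j\<in>lattS N - {i}. Umat w i j * f j) = (\<Sum>(l, m)\<in>off_diag. w l m * real (i l) * f (move l m i))"
proof -
  define E where "E = {(l, m) \<in> off_diag. i l \<noteq> 0}"
  have inj: "inj_on (\<lambda>(l, m). move l m i) E"
  proof (rule inj_onI, clarify)
    fix l m l' m' assume "(l, m) \<in> E" "(l', m') \<in> E" "move l m i = move l' m' i"
    then show "l = l' \<and> m = m'"
      using move_inj[of l m i l' m'] unfolding E_def off_diag_def by blast
  qed
  have "(\<Sum>j\<in>lattS N - {i}. Umat w i j * f j) = (\<Sum>j\<in>(\<lambda>(l, m). move l m i) ` E. Umat w i j * f j)"
  proof (rule sum.mono_neutral_right)
    show "(\<lambda>(l, m). move l m i) ` E \<subseteq> lattS N - {i}"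
      using i by (auto simp: E_def off_diag_def move_neq intro: move_in_lattS)
    have "Umat w i j = 0" if j: "j \<in> lattS N - {i} - (\<lambda>(l, m). move l m i) ` E" for j
    proof (rule Umat_eq_0)
      show "j \<noteq> move l m i" if "l \<noteq> m" "i l \<noteq> 0" for l m
      proof -
        have "move l m i \<in> (\<lambda>(l, m). move l m i) ` E"
          using that by (force simp: E_def off_diag_def)
        then show ?thesis
          using j by blast
      qed
    qed (use j in simp)
    then show "\<forall>j\<in>lattS N - {i} - (\<lambda>(l, m). move l m i) ` E. Umat w i j * f j = 0"
      by simp
  qed simp
  also have "\<dots> = (\<Sum>(l, m)\<in>E. Umat w i (move l m i) * f (move l m i))"
    unfolding sum.reindex[OF inj] by (simp add: case_prod_beta)
  also have "\<dots> = (\<Sum>(l, m)\<in>E. w l m * real (i l) * f (move l m i))"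
    by (rule sum.cong) (auto simp: E_def off_diag_def Umat_move)
  also have "\<dots> = (\<Sum>(l, m)\<in>off_diag. w l m * real (i l) * f (move l m i))"
    by (rule sum.mono_neutral_left) (auto simp: E_def)
  finally show ?thesis .
qed

lemma Umat_apply:
  fixes f :: "('a::finite \<Rightarrow> nat) \<Rightarrow> real"
  assumes i: "i \<in> lattS N"
  shows "(\<Sum>j\<in>lattS N. Umat w i j * f j) = (\<Sum>(l, m)\<in>off_diag. w l m * real (i l) * (f (move l m i) - f i))"
proof -
  have "(\<Sum>j\<in>lattS N. Umat w i j * f j) = Umat w i i * f i + (\<Sum>j\<in>lattS N - {i}. Umat w i j * f j)"
    using i by (simp add: sum.remove)
  also have "\<dots> = (\<Sum>(l, m)\<in>off_diag. w l m * real (i l) * f (move l m i)) - (\<Sum>(l, m)\<in>off_diag. w l m * real (i l) * f i)"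
    by (simp add: sum_Umat_off_diagonal[OF i] Umat_diag sum_distrib_right case_prod_beta)
  finally show ?thesis
    by (simp add: sum_subtractf right_diff_distrib case_prod_beta)
qed

subsection \<open>The Donsker--Varadhan functional\<close>

definition dv_value :: "('a::finite \<Rightarrow> 'a \<Rightarrow> real) \<Rightarrow> nat \<Rightarrow> (('a \<Rightarrow> nat) \<Rightarrow> real) \<Rightarrow> (('a \<Rightarrow> nat) \<Rightarrow> real) \<Rightarrow> real"
  where "dv_value w N \<nu> v = - (\<Sum>i\<in>lattS N. \<nu> i * (\<Sum>j\<in>lattS N. Umat w i j * v j) / v i)"

definition jump_flow :: "('a \<Rightarrow> 'a \<Rightarrow> real) \<Rightarrow> (('a \<Rightarrow> nat) \<Rightarrow> real) \<Rightarrow> 'a \<Rightarrow> 'a \<Rightarrow> ('a \<Rightarrow> nat) \<Rightarrow> real"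
  where "jump_flow w \<nu> l m i = real (Suc (i l)) * w l m * \<nu> (incr l i)"

definition dv_bound :: "('a::finite \<Rightarrow> 'a \<Rightarrow> real) \<Rightarrow> nat \<Rightarrow> (('a \<Rightarrow> nat) \<Rightarrow> real) \<Rightarrow> real"
  where "dv_bound w M \<nu> =
    (\<Sum>(l, m)\<in>off_diag. \<Sum>i\<in>lattS M. jump_flow w \<nu> l m i - sqrt (jump_flow w \<nu> l m i * jump_flow w \<nu> m l i))"

lemma I_U_eq_SUP_dv_value: "I_U w N \<nu> = (SUP v \<in> {v. \<forall>j\<in>lattS N. v j > 0}. dv_value w N \<nu> v)"
  unfolding I_U_def dv_value_def ..

lemma move_incr: "l \<noteq> m \<Longrightarrow> move l m (incr l i) = incr m i"
  by (auto simp: move_def incr_def fun_eq_iff)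

lemma dv_value_eq_sum_jump_flow:
  assumes v: "\<And>j. j \<in> lattS (Suc M) \<Longrightarrow> v j > 0"
  shows "dv_value w (Suc M) \<nu> v =
    (\<Sum>(l, m)\<in>off_diag. \<Sum>i\<in>lattS M. jump_flow w \<nu> l m i * (1 - v (incr m i) / v (incr l i)))"
proof -
  have "(\<Sum>i\<in>lattS (Suc M). \<nu> i * (\<Sum>j\<in>lattS (Suc M). Umat w i j * v j) / v i)
     = (\<Sum>i\<in>lattS (Suc M). \<Sum>(l, m)\<in>off_diag. real (i l) * (w l m * \<nu> i * (v (move l m i) / v i - 1)))"
  proof (rule sum.cong)
    fix i :: "'a \<Rightarrow> nat" assume i: "i \<in> lattS (Suc M)"
    then show "\<nu> i * (\<Sum>j\<in>lattS (Suc M). Umat w i j * v j) / v i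
      = (\<Sum>(l, m)\<in>off_diag. real (i l) * (w l m * \<nu> i * (v (move l m i) / v i - 1)))"
      using v[OF i] unfolding Umat_apply[OF i]
      by (simp add: sum_distrib_left sum_divide_distrib case_prod_beta field_simps)
  qed simp
  also have "\<dots> = (\<Sum>(l, m)\<in>off_diag. \<Sum>i\<in>lattS (Suc M). real (i l) * (w l m * \<nu> i * (v (move l m i) / v i - 1)))"
    unfolding split_def by (rule sum.swap)
  also have "\<dots> = (\<Sum>(l, m)\<in>off_diag. \<Sum>i\<in>lattS M.
      real (Suc (i l)) * (w l m * \<nu> (incr l i) * (v (move l m (incr l i)) / v (incr l i) - 1)))"
    by (simp only: sum_lattS_Suc_coord)
  also have "\<dots> = (\<Sum>(l, m)\<in>off_diag. \<Sum>i\<in>lattS M. - (jump_flow w \<nu> l m i * (1 - v (incr m i) / v (incr l i))))"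
    by (intro sum.cong refl) (auto simp: off_diag_def move_incr jump_flow_def algebra_simps add_divide_distrib)
  finally show ?thesis
    unfolding dv_value_def by (simp add: sum_negf case_prod_beta)
qed

lemma sqrt_mult_le_reciprocal_weights:
  fixes a b s t :: real
  assumes "a \<ge> 0" "b \<ge> 0" "s > 0" "t > 0" "s * t = 1"
  shows "sqrt (a * b) \<le> (a * s + b * t) / 2"
proof -
  have "(a * s) * (b * t) = a * b * (s * t)"
    by (simp only: mult_ac)
  then have weights: "(a * s) * (b * t) = a * b"
    using assms(5) by simp
  have "sqrt ((a * s) * (b * t)) \<le> (a * s + b * t) / 2"
    by (rule arith_geo_mean_sqrt) (use assms(1-4) in simp_all)
  then show ?thesis
    unfolding weights .
qed

lemma sum_off_diag_sqrt_le:
  fixes A t :: "'a::finite \<Rightarrow> 'a \<Rightarrow> 'b \<Rightarrow> real"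
  assumes "finite I"
    and A: "\<And>l m x. l \<noteq> m \<Longrightarrow> x \<in> I \<Longrightarrow> A l m x \<ge> 0"
    and t: "\<And>l m x. l \<noteq> m \<Longrightarrow> x \<in> I \<Longrightarrow> t l m x * t m l x = 1"
    and t_pos: "\<And>l m x. l \<noteq> m \<Longrightarrow> x \<in> I \<Longrightarrow> t l m x > 0"
  shows "(\<Sum>(l, m)\<in>off_diag. \<Sum>x\<in>I. sqrt (A l m x * A m l x)) \<le> (\<Sum>(l, m)\<in>off_diag. \<Sum>x\<in>I. A l m x * t l m x)"
proof -
  have "(\<Sum>(l, m)\<in>off_diag. \<Sum>x\<in>I. sqrt (A l m x * A m l x))
      \<le> (\<Sum>(l, m)\<in>off_diag. \<Sum>x\<in>I. (A l m x * t l m x + A m l x * t m l x) / 2)"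
  proof (rule sum_mono, clarify, rule sum_mono)
    fix l m :: 'a and x assume "(l, m) \<in> off_diag" "x \<in> I"
    then have lm: "l \<noteq> m" "m \<noteq> l" and x: "x \<in> I"
      by (auto simp: off_diag_def)
    show "sqrt (A l m x * A m l x) \<le> (A l m x * t l m x + A m l x * t m l x) / 2"
      by (rule sqrt_mult_le_reciprocal_weights)
        (use A[OF lm(1) x] A[OF lm(2) x] t[OF lm(1) x] t_pos[OF lm(1) x] t_pos[OF lm(2) x] in auto)
  qed
  also have "\<dots> = ((\<Sum>(l, m)\<in>off_diag. \<Sum>x\<in>I. A l m x * t l m x) + (\<Sum>(l, m)\<in>off_diag. \<Sum>x\<in>I. A m l x * t m l x)) / 2"
    by (simp add: sum.distrib case_prod_beta flip: sum_divide_distrib)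
  also have "(\<Sum>(l, m)\<in>off_diag. \<Sum>x\<in>I. A m l x * t m l x) = (\<Sum>(l, m)\<in>off_diag. \<Sum>x\<in>I. A l m x * t l m x)"
    by (rule sum_off_diag_swap[symmetric])
  finally show ?thesis
    by simp
qed

lemma dv_value_le_dv_bound:
  assumes w: "\<And>l m. l \<noteq> m \<Longrightarrow> w l m \<ge> 0" and \<nu>: "\<And>i. i \<in> lattS (Suc M) \<Longrightarrow> \<nu> i \<ge> 0"
    and v: "\<And>j. j \<in> lattS (Suc M) \<Longrightarrow> v j > 0"
  shows "dv_value w (Suc M) \<nu> v \<le> dv_bound w M \<nu>"
proof -
  let ?F = "jump_flow w \<nu>" and ?t = "\<lambda>l m i. v (incr m i) / v (incr l i)"
  have "(\<Sum>(l, m)\<in>off_diag. \<Sum>i\<in>lattS M. sqrt (?F l m i * ?F m l i))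
      \<le> (\<Sum>(l, m)\<in>off_diag. \<Sum>i\<in>lattS M. ?F l m i * ?t l m i)"
  proof (rule sum_off_diag_sqrt_le)
    fix l m :: 'a and i :: "'a \<Rightarrow> nat" assume "l \<noteq> m" "i \<in> lattS M"
    moreover have "v (incr l i) > 0" "v (incr m i) > 0" "\<nu> (incr l i) \<ge> 0"
      using v \<nu> incr_in_lattS[OF \<open>i \<in> lattS M\<close>] by auto
    ultimately show "?F l m i \<ge> 0" "?t l m i * ?t m l i = 1" "?t l m i > 0"
      using w by (auto simp: jump_flow_def)
  qed simp
  moreover have "dv_value w (Suc M) \<nu> v
      = (\<Sum>(l, m)\<in>off_diag. \<Sum>i\<in>lattS M. ?F l m i) - (\<Sum>(l, m)\<in>off_diag. \<Sum>i\<in>lattS M. ?F l m i * ?t l m i)"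
    by (simp add: dv_value_eq_sum_jump_flow[OF v] sum_subtractf right_diff_distrib case_prod_beta)
  moreover have "dv_bound w M \<nu>
      = (\<Sum>(l, m)\<in>off_diag. \<Sum>i\<in>lattS M. ?F l m i) - (\<Sum>(l, m)\<in>off_diag. \<Sum>i\<in>lattS M. sqrt (?F l m i * ?F m l i))"
    unfolding dv_bound_def by (simp add: sum_subtractf case_prod_beta)
  ultimately show ?thesis
    by linarith
qed

lemma I_U_le_dv_bound:
  assumes "\<And>l m. l \<noteq> m \<Longrightarrow> w l m \<ge> 0" and "\<And>i. i \<in> lattS (Suc M) \<Longrightarrow> \<nu> i \<ge> 0"
  shows "I_U w (Suc M) \<nu> \<le> dv_bound w M \<nu>"
  unfolding I_U_eq_SUP_dv_value
proof (rule cSUP_least)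
  show "{v :: ('a \<Rightarrow> nat) \<Rightarrow> real. \<forall>j\<in>lattS (Suc M). 0 < v j} \<noteq> {}"
    by (auto intro!: exI[of _ "\<lambda>_. 1"])
next
  fix v :: "('a \<Rightarrow> nat) \<Rightarrow> real" assume "v \<in> {v. \<forall>j\<in>lattS (Suc M). 0 < v j}"
  then show "dv_value w (Suc M) \<nu> v \<le> dv_bound w M \<nu>"
    by (intro dv_value_le_dv_bound) (use assms in auto)
qed

lemma dv_value_le_I_U:
  assumes "\<And>l m. l \<noteq> m \<Longrightarrow> w l m \<ge> 0" and "\<And>i. i \<in> lattS (Suc M) \<Longrightarrow> \<nu> i \<ge> 0"
    and "\<And>j. j \<in> lattS (Suc M) \<Longrightarrow> v j > 0"
  shows "dv_value w (Suc M) \<nu> v \<le> I_U w (Suc M) \<nu>"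
  unfolding I_U_eq_SUP_dv_value
proof (rule cSUP_upper)
  show "bdd_above (dv_value w (Suc M) \<nu> ` {v. \<forall>j\<in>lattS (Suc M). 0 < v j})"
  proof (rule bdd_aboveI2)
    fix v :: "('a \<Rightarrow> nat) \<Rightarrow> real" assume "v \<in> {v. \<forall>j\<in>lattS (Suc M). 0 < v j}"
    then show "dv_value w (Suc M) \<nu> v \<le> dv_bound w M \<nu>"
      by (intro dv_value_le_dv_bound) (use assms in auto)
  qed
qed (use assms(3) in auto)

lemma sum_jump_flow:
  "(\<Sum>i\<in>lattS M. jump_flow w \<nu> l m i) = w l m * (\<Sum>j\<in>lattS (Suc M). \<nu> j * real (j l))"
proof -
  have "(\<Sum>i\<in>lattS M. jump_flow w \<nu> l m i) = w l m * (\<Sum>i\<in>lattS M. real (Suc (i l)) * \<nu> (incr l i))"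
    by (simp add: jump_flow_def sum_distrib_left algebra_simps)
  also have "\<dots> = w l m * (\<Sum>j\<in>lattS (Suc M). real (j l) * \<nu> j)"
    by (simp only: sum_lattS_Suc_coord)
  finally show ?thesis
    by (simp add: ac_simps)
qed

lemma dv_value_product:
  assumes a: "\<And>l. a l > 0"
  shows "dv_value w (Suc M) \<nu> (\<lambda>i. \<Prod>l\<in>UNIV. a l ^ i l)
    = (\<Sum>(l, m)\<in>off_diag. w l m * (\<Sum>j\<in>lattS (Suc M). \<nu> j * real (j l)) * (1 - a m / a l))"
proof -
  let ?v = "\<lambda>i. \<Prod>l\<in>UNIV. a l ^ i l"
  have v_pos: "?v i > 0" for i
    using a by (simp add: prod_pos)
  have ratio: "?v (incr m i) / ?v (incr l i) = a m / a l" for l m i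
  proof -
    have "?v i \<noteq> 0"
      using v_pos[of i] by linarith
    then show ?thesis
      unfolding prod_incr_power by (rule nonzero_mult_divide_mult_cancel_right)
  qed
  have "dv_value w (Suc M) \<nu> ?v = (\<Sum>(l, m)\<in>off_diag. \<Sum>i\<in>lattS M. jump_flow w \<nu> l m i * (1 - a m / a l))"
    using dv_value_eq_sum_jump_flow[of M ?v w \<nu>] v_pos by (simp only: ratio)
  then show ?thesis
    by (simp add: sum_jump_flow case_prod_beta flip: sum_distrib_right)
qed

subsection \<open>Reversibility\<close>

lemma reversible_irreducible_pos:
  assumes irr: "irreducible_gen w" and rev: "reversible_wrt w \<gamma>"
  shows "\<gamma> l > 0"
proof -
  have nonneg: "\<And>l. \<gamma> l \<ge> 0" and sum_1: "(\<Sum>l\<in>UNIV. \<gamma> l) = 1"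
    and balance: "\<And>l m. \<gamma> l * w l m = \<gamma> m * w m l"
    using rev unfolding reversible_wrt_def by auto
  have "\<exists>m. \<gamma> m > 0"
  proof (rule ccontr)
    assume "\<nexists>m. \<gamma> m > 0"
    then have "(\<Sum>l\<in>UNIV. \<gamma> l) \<le> 0"
      by (simp add: not_less sum_nonpos)
    then show False
      using sum_1 by simp
  qed
  then obtain m where "\<gamma> m > 0" ..
  have "(m, l) \<in> {(a, b). a \<noteq> b \<and> w a b > 0}\<^sup>*"
    using irr unfolding irreducible_gen_def by blast
  from this \<open>\<gamma> m > 0\<close> show ?thesis
  proof (induction rule: rtrancl_induct)
    case base
    then show ?case .
  next
    case (step y x)
    then have "\<gamma> y * w y x > 0"
      by simp
    then have "\<gamma> x * w x y > 0"
      by (simp only: balance)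
    then show ?case
      using nonneg[of x] by (simp add: zero_less_mult_iff)
  qed
qed

text \<open>Under detailed balance the jump ratio \<open>a\<^sub>m / a\<^sub>l\<close> of the test function with
  \<open>a\<^sub>l = sqrt (z\<^sub>l / \<gamma>\<^sub>l)\<close> turns the forward flux into the geometric mean of the fluxes in both directions.\<close>
lemma detailed_balance_sqrt_flux:
  fixes w w' z z' g g' :: real
  assumes "g > 0" "g' > 0" "g * w = g' * w'" "w \<ge> 0" "z > 0" "z' > 0"
  shows "w * z * (sqrt (z' / g') / sqrt (z / g)) = sqrt (w * z * (w' * z'))"
proof (rule real_sqrt_unique[symmetric])
  have "w' = g * w / g'"
    using assms by (simp add: field_simps)
  then show "(w * z * (sqrt (z' / g') / sqrt (z / g)))\<^sup>2 = w * z * (w' * z')"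
    using assms by (simp add: power_mult_distrib power_divide field_simps power2_eq_square)
  show "w * z * (sqrt (z' / g') / sqrt (z / g)) \<ge> 0"
    using assms by simp
qed

definition flux_hellinger :: "('a::finite \<Rightarrow> 'a \<Rightarrow> real) \<Rightarrow> ('a \<Rightarrow> real) \<Rightarrow> real"
  where "flux_hellinger w z = (\<Sum>(l, m)\<in>off_diag. w l m * z l - sqrt (w l m * z l * (w m l * z m)))"

lemma Sfrak_sqrt_gap_eq_flux_hellinger:
  assumes w: "\<And>l m. l \<noteq> m \<Longrightarrow> w l m \<ge> 0" and z: "\<And>l. z l \<ge> 0"
  shows "1/2 * (\<Sum>k\<in>Sfrak. (sqrt (Ufun w k z) - sqrt (Ufun w (\<lambda>a. - k a) z))\<^sup>2) = flux_hellinger w z"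
proof -
  have sqrt_diff_sq: "(sqrt x - sqrt y)\<^sup>2 = x + y - 2 * sqrt (x * y)" if "x \<ge> 0" "y \<ge> 0" for x y :: real
    using that by (simp add: power2_eq_square algebra_simps real_sqrt_mult)
  have "(\<Sum>k\<in>Sfrak. (sqrt (Ufun w k z) - sqrt (Ufun w (\<lambda>a. - k a) z))\<^sup>2)
      = (\<Sum>(l, m)\<in>off_diag. (sqrt (Ufun w (jump l m) z) - sqrt (Ufun w (jump m l) z))\<^sup>2)"
    unfolding Sfrak_eq_jump_image sum.reindex[OF inj_on_jump] by (simp add: case_prod_beta uminus_jump)
  also have "\<dots> = (\<Sum>(l, m)\<in>off_diag. w l m * z l + w m l * z m - 2 * sqrt (w l m * z l * (w m l * z m)))"
  proof (rule sum.cong, simp, clarify)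
    fix l m :: 'a assume "(l, m) \<in> off_diag"
    then have "l \<noteq> m"
      by (simp add: off_diag_def)
    moreover have "w l m * z l \<ge> 0" "w m l * z m \<ge> 0"
      using w z \<open>l \<noteq> m\<close> by simp_all
    ultimately show "(sqrt (Ufun w (jump l m) z) - sqrt (Ufun w (jump m l) z))\<^sup>2
      = w l m * z l + w m l * z m - 2 * sqrt (w l m * z l * (w m l * z m))"
      by (simp add: Ufun_jump sqrt_diff_sq)
  qed
  also have "\<dots> = (\<Sum>(l, m)\<in>off_diag. w l m * z l) + (\<Sum>(l, m)\<in>off_diag. w m l * z m)
      - 2 * (\<Sum>(l, m)\<in>off_diag. sqrt (w l m * z l * (w m l * z m)))"
    by (simp add: sum.distrib sum_subtractf sum_distrib_left case_prod_beta)
  also have "(\<Sum>(l, m)\<in>off_diag. w m l * z m) = (\<Sum>(l, m)\<in>off_diag. w l m * z l)"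
    by (rule sum_off_diag_swap[symmetric])
  finally show ?thesis
    unfolding flux_hellinger_def by (simp add: sum_subtractf case_prod_beta)
qed

subsection \<open>The variational problem\<close>

lemma multinomial_in_feasible:
  assumes "N > 0" and z: "\<And>l. z l \<ge> 0" and sum_z: "(\<Sum>l\<in>UNIV. z l) = real N"
  shows "multinomial N (\<lambda>l. z l / real N) \<in> feasible N z"
proof -
  obtain M where N: "N = Suc M"
    using \<open>N > 0\<close> gr0_implies_Suc by blast
  have "(\<Sum>l\<in>UNIV. z l / real N) = 1"
    using sum_z \<open>N > 0\<close> by (simp flip: sum_divide_distrib)
  then show ?thesis
    unfolding feasible_def probS_def N
    using z by (simp add: multinomial_nonneg sum_multinomial multinomial_mean mult.commute[of _ "multinomial _ _ _"])
qed

lemma pairR_eq_Rlin: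
  assumes "\<nu> \<in> feasible N z"
  shows "pairR N \<nu> r = Rlin r z"
proof -
  have "pairR N \<nu> r = (\<Sum>l\<in>UNIV. r l * (\<Sum>i\<in>lattS N. \<nu> i * real (i l)))"
    unfolding pairR_def Rlin_def by (simp add: sum_distrib_left sum.swap[of _ "lattS N"] algebra_simps)
  also have "\<dots> = Rlin r z"
    using assms unfolding Rlin_def feasible_def by simp
  finally show ?thesis .
qed

lemma flux_hellinger_le_I_U:
  assumes w: "\<And>l m. l \<noteq> m \<Longrightarrow> w l m \<ge> 0" and "irreducible_gen w" and "reversible_wrt w \<gamma>"
    and z: "\<And>l. z l > 0" and \<nu>: "\<nu> \<in> feasible (Suc M) z"
  shows "flux_hellinger w z \<le> I_U w (Suc M) \<nu>"
proof -
  have \<gamma>: "\<gamma> l > 0" for l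
    using reversible_irreducible_pos assms(2,3) .
  have balance: "\<gamma> l * w l m = \<gamma> m * w m l" for l m
    using assms(3) by (simp add: reversible_wrt_def)
  define a where "a l = sqrt (z l / \<gamma> l)" for l
  have a: "a l > 0" for l
    using z \<gamma> by (simp add: a_def)
  have "dv_value w (Suc M) \<nu> (\<lambda>i. \<Prod>l\<in>UNIV. a l ^ i l)
      = (\<Sum>(l, m)\<in>off_diag. w l m * z l * (1 - a m / a l))"
    using \<nu> by (simp add: dv_value_product[OF a] feasible_def)
  also have "\<dots> = flux_hellinger w z"
    unfolding flux_hellinger_def
  proof (intro sum.cong refl, clarify)
    fix l m :: 'a assume "(l, m) \<in> off_diag"
    then have "w l m \<ge> 0"
      using w by (simp add: off_diag_def)
    then show "w l m * z l * (1 - a m / a l) = w l m * z l - sqrt (w l m * z l * (w m l * z m))"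
      unfolding right_diff_distrib mult_1_right a_def
      by (simp only: detailed_balance_sqrt_flux[OF \<gamma> \<gamma> balance _ z z])
  qed
  finally have "flux_hellinger w z = dv_value w (Suc M) \<nu> (\<lambda>i. \<Prod>l\<in>UNIV. a l ^ i l)" ..
  also have "\<dots> \<le> I_U w (Suc M) \<nu>"
    using \<nu> a by (intro dv_value_le_I_U) (auto simp: w feasible_def probS_def prod_pos)
  finally show ?thesis .
qed

lemma I_U_multinomial_le_flux_hellinger:
  assumes w: "\<And>l m. l \<noteq> m \<Longrightarrow> w l m \<ge> 0" and z: "\<And>l. z l \<ge> 0"
    and sum_z: "(\<Sum>l\<in>UNIV. z l) = real (Suc M)"
  shows "I_U w (Suc M) (multinomial (Suc M) (\<lambda>l. z l / real (Suc M))) \<le> flux_hellinger w z"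
proof -
  define p where "p = (\<lambda>l. z l / real (Suc M))"
  let ?\<mu> = "multinomial (Suc M) p"
  have p: "p l \<ge> 0" for l
    using z by (simp add: p_def)
  have "(\<Sum>l\<in>UNIV. p l) = 1"
    using sum_z by (simp add: p_def flip: sum_divide_distrib)
  then have sum_multinomial_M: "(\<Sum>i\<in>lattS M. multinomial M p i) = 1"
    by (simp add: sum_multinomial)
  have flow: "jump_flow w ?\<mu> l m i = w l m * z l * multinomial M p i" if "i \<in> lattS M" for l m i
    using multinomial_incr[OF that, of l p] by (simp add: jump_flow_def p_def field_simps del: of_nat_Suc)
  have "dv_bound w M ?\<mu>
      = (\<Sum>(l, m)\<in>off_diag. \<Sum>i\<in>lattS M. (w l m * z l - sqrt (w l m * z l * (w m l * z m))) * multinomial M p i)"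
    unfolding dv_bound_def
  proof (rule sum.cong[OF refl], clarify, rule sum.cong[OF refl])
    fix l m :: 'a and i :: "'a \<Rightarrow> nat" assume "i \<in> lattS M"
    moreover have "multinomial M p i \<ge> 0"
      using p by (rule multinomial_nonneg)
    ultimately show "jump_flow w ?\<mu> l m i - sqrt (jump_flow w ?\<mu> l m i * jump_flow w ?\<mu> m l i)
      = (w l m * z l - sqrt (w l m * z l * (w m l * z m))) * multinomial M p i"
      by (simp add: flow real_sqrt_mult abs_of_nonneg algebra_simps)
  qed
  also have "\<dots> = flux_hellinger w z"
    by (simp add: flux_hellinger_def sum_multinomial_M case_prod_beta flip: sum_distrib_left)
  finally have "dv_bound w M ?\<mu> = flux_hellinger w z" .
  moreover have "I_U w (Suc M) ?\<mu> \<le> dv_bound w M ?\<mu>"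
    by (intro I_U_le_dv_bound w multinomial_nonneg p)
  ultimately show ?thesis
    unfolding p_def by simp
qed

theorem theorem2:
  fixes w :: "'a::finite \<Rightarrow> 'a \<Rightarrow> real" and \<gamma> :: "'a \<Rightarrow> real"
    and r z :: "'a \<Rightarrow> real" and N :: nat
  assumes "N \<ge> 1"
    and "markov_generator w" and "irreducible_gen w" and "reversible_wrt w \<gamma>"
    and "\<forall>l. z l > 0" and "(\<Sum>l\<in>UNIV. z l) = real N"
  shows "multinomial N (\<lambda>l. z l / real N) \<in> feasible N z
    \<and> (\<forall>\<nu>\<in>feasible N z. objective w r N \<nu> \<le> objective w r N (multinomial N (\<lambda>l. z l / real N)))
    \<and> Lam w r N z = Rlin r z - 1/2 * (\<Sum>k\<in>Sfrak. (sqrt (Ufun w k z) - sqrt (Ufun w (\<lambda>a. - k a) z))\<^sup>2)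
    \<and> objective w r N (multinomial N (\<lambda>l. z l / real N))
        = Rlin r z - 1/2 * (\<Sum>k\<in>Sfrak. (sqrt (Ufun w k z) - sqrt (Ufun w (\<lambda>a. - k a) z))\<^sup>2)"
proof -
  obtain M where N: "N = Suc M"
    using assms(1) by (cases N) auto
  have w: "\<And>l m. l \<noteq> m \<Longrightarrow> w l m \<ge> 0"
    using assms(2) by (simp add: markov_generator_def)
  have z: "\<And>l. z l > 0" "\<And>l. z l \<ge> 0"
    using assms(5) less_imp_le by auto
  let ?\<mu> = "multinomial N (\<lambda>l. z l / real N)"
  have feasible: "?\<mu> \<in> feasible N z"
    using z(2) assms(6) N by (intro multinomial_in_feasible) auto
  have I_bound: "flux_hellinger w z \<le> I_U w N \<nu>" if "\<nu> \<in> feasible N z" for \<nu>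
    unfolding N by (rule flux_hellinger_le_I_U) (use w assms(3,4) z(1) that N in auto)
  have I_\<mu>: "I_U w N ?\<mu> = flux_hellinger w z"
  proof (rule antisym)
    show "I_U w N ?\<mu> \<le> flux_hellinger w z"
      unfolding N by (rule I_U_multinomial_le_flux_hellinger) (use w z(2) assms(6) N in auto)
  qed (rule I_bound[OF feasible])
  have objective_le: "\<forall>\<nu>\<in>feasible N z. objective w r N \<nu> \<le> objective w r N ?\<mu>"
    using I_bound feasible by (simp add: objective_def pairR_eq_Rlin I_\<mu>)
  have "Lam w r N z = objective w r N ?\<mu>"
    unfolding Lam_def by (rule cSup_eq_maximum) (use feasible objective_le in auto)
  moreover have "1/2 * (\<Sum>k\<in>Sfrak. (sqrt (Ufun w k z) - sqrt (Ufun w (\<lambda>a. - k a) z))\<^sup>2) = flux_hellinger w z"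
    by (rule Sfrak_sqrt_gap_eq_flux_hellinger) (use w z(2) in auto)
  ultimately show ?thesis
    using feasible objective_le by (simp add: objective_def pairR_eq_Rlin I_\<mu>)
qed

end
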